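(* Let $\mathcal S$ be a finite generating set of $M_n(\mathbb{C})$, i.e. $\mathcal L(\mathcal S)=M_n(\mathbb{C})$. (1) If $l(\mathcal S)\ge n$ and $\mathcal L_1^0(\mathcal S)$ contains an invertible matrix, then $l_0(\mathcal S)=l(\mathcal S)$. (2) If $l(\mathcal S)=2n-2$ and $\mathcal L_2^0(\mathcal S)$ contains an invertible derogatory matrix, then $l_0(\mathcal S)=l(\mathcal S)$.
   Context: For a finite subset $\mathcal S$ of $M_n(\mathbb{F})$: a word of length $m$ in $\mathcal S$ is a product $S_1S_2\cdots S_m$ with each $S_j\in\mathcal S$; the word of length $0$ is the identity $I_n$. $\mathcal L_k(\mathcal S)$ is the linear span of all words of length at most $k$ (including the identity as the word of length $0$), and $\mathcal L(\mathcal S)=\bigcup_k\mathcal L_k(\mathcal S)$. $\mathcal L_k^0(\mathcal S)$ is the linear span of all words of length between $1$ and $k$ (the identity is not automatically included), and $\mathcal L^0(\mathcal S)=\bigcup_k \mathcal L_k^0(\mathcal S)$. The length $l(\mathcal S)$ is the smallest $k$ with $\mathcal L_k(\mathcal S)=\mathcal L_{k+1}(\mathcal S)$; the length $l_0(\mathcal S)$ is the smallest $k$ with $\mathcal L_k^0(\mathcal S)=\mathcal L_{k+1}^0(\mathcal S)$. A matrix is derogatory if its minimal polynomial has degree less than $n$. *)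

theory Defs
  imports "HOL-Analysis.Analysis" "HOL-Computational_Algebra.Polynomial"
begin

type_synonym ('n) cmat = "complex ^ 'n ^ 'n"

definition mscale :: "complex \<Rightarrow> ('n::finite) cmat \<Rightarrow> ('n::finite) cmat" where
  "mscale c A = (\<chi> i j. c * A $ i $ j)"

definition lin_span :: "('n::finite) cmat set \<Rightarrow> ('n::finite) cmat set" where
  "lin_span W = {A. \<exists>F c. finite F \<and> F \<subseteq> W \<and> A = (\<Sum>w\<in>F. mscale (c w) w)}"

fun words :: "('n::finite) cmat set \<Rightarrow> nat \<Rightarrow> ('n::finite) cmat set" where
  "words S 0 = {mat 1}"
| "words S (Suc m) = {A ** B | A B. A \<in> S \<and> B \<in> words S m}"

definition L :: "('n::finite) cmat set \<Rightarrow> nat \<Rightarrow> ('n::finite) cmat set" where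
  "L S k = lin_span (\<Union>m\<in>{0..k}. words S m)"

definition L0 :: "('n::finite) cmat set \<Rightarrow> nat \<Rightarrow> ('n::finite) cmat set" where
  "L0 S k = lin_span (\<Union>m\<in>{1..k}. words S m)"

definition L_all :: "('n::finite) cmat set \<Rightarrow> ('n::finite) cmat set" where
  "L_all S = (\<Union>k. L S k)"

definition L0_all :: "('n::finite) cmat set \<Rightarrow> ('n::finite) cmat set" where
  "L0_all S = (\<Union>k. L0 S k)"

definition len :: "('n::finite) cmat set \<Rightarrow> nat" where
  "len S = (LEAST k. L S k = L S (Suc k))"

definition len0 :: "('n::finite) cmat set \<Rightarrow> nat" where
  "len0 S = (LEAST k. L0 S k = L0 S (Suc k))"

definition mpow :: "('n::finite) cmat \<Rightarrow> nat \<Rightarrow> ('n::finite) cmat" where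
  "mpow A i = (((**) A) ^^ i) (mat 1)"

definition poly_mat_eval :: "complex poly \<Rightarrow> ('n::finite) cmat \<Rightarrow> ('n::finite) cmat" where
  "poly_mat_eval p A = (\<Sum>i\<le>degree p. mscale (coeff p i) (mpow A i))"

definition min_poly :: "('n::finite) cmat \<Rightarrow> complex poly" where
  "min_poly A = (THE p. lead_coeff p = 1 \<and> poly_mat_eval p A = 0 \<and>
     (\<forall>q. q \<noteq> 0 \<and> poly_mat_eval q A = 0 \<longrightarrow> degree p \<le> degree q))"

definition derogatory :: "('n::finite) cmat \<Rightarrow> bool" where
  "derogatory A \<longleftrightarrow> degree (min_poly A) < CARD('n)"

end

theory Submission
  imports Defs
begin

text \<open>If the identity lies in \<open>L0 S (len S)\<close>, then \<open>L0 S (len S)\<close> contains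
  \<open>L S (len S) = M\<^sub>n(\<complex>)\<close>, while for \<open>k < len S\<close> the space \<open>L0 S k \<subseteq> L S k\<close> is proper;
  so \<open>L0\<close> stabilises exactly at \<open>len S\<close>. For invertible \<open>A\<close> the minimal polynomial has a
  nonzero constant term, so the identity is a combination of \<open>A, \<dots>, A\<^sup>d\<close>, \<open>d\<close> its degree;
  if \<open>A \<in> L0 S t\<close> this puts the identity into \<open>L0 S (t * d)\<close>. Finally \<open>t * d \<le> len S\<close> in
  both cases: \<open>d \<le> n\<close> always (shown with Krylov subspaces), and \<open>d \<le> n - 1\<close> for derogatory
  \<open>A\<close>.\<close>

section \<open>Matrices as a complex vector space\<close>

lemma mscale_nth [simp]: "mscale c A $ i $ j = c * A $ i $ j"
  by (simp add: mscale_def)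

lemma mscale_add_right: "mscale c (A + B) = mscale c A + mscale c B"
  and mscale_add_left: "mscale (a + b) A = mscale a A + mscale b A"
  by (simp_all add: vec_eq_iff ring_distribs)

lemma mscale_mscale [simp]: "mscale a (mscale b A) = mscale (a * b) A"
  and mscale_one [simp]: "mscale 1 A = A"
  and mscale_zero_left [simp]: "mscale 0 A = 0"
  and mscale_zero_right [simp]: "mscale c 0 = 0"
  by (simp_all add: vec_eq_iff)

interpretation cmat: vector_space "mscale :: complex \<Rightarrow> ('n::finite) cmat \<Rightarrow> 'n cmat"
  by unfold_locales (simp_all add: mscale_add_right mscale_add_left)

lemma lin_span_eq_span: "lin_span W = cmat.span W"
  unfolding lin_span_def cmat.span_explicit by auto

lemma matrix_mult_mscale_left: "mscale c A ** B = mscale c (A ** B)"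
  and matrix_mult_mscale_right: "A ** mscale c B = mscale c (A ** B)"
  by (simp_all add: vec_eq_iff matrix_matrix_mult_def sum_distrib_left algebra_simps)

lemma matrix_add_rdistrib: "(B + C) ** A = B ** A + C ** A"
  by (simp add: vec_eq_iff matrix_matrix_mult_def sum.distrib ring_distribs)

lemma mscale_matrix_vector_mult: "mscale c A *v x = c *s (A *v x)"
  by (simp add: vec_eq_iff matrix_vector_mult_def sum_distrib_left algebra_simps)

lemma matrix_mult_sum_right: "A ** (\<Sum>i\<in>F. f i) = (\<Sum>i\<in>F. A ** f i)"
  by (induction F rule: infinite_finite_induct) (auto simp: matrix_add_ldistrib)

lemma sum_matrix_vector_mult: "(\<Sum>i\<in>F. f i) *v x = (\<Sum>i\<in>F. f i *v x)"
  by (induction F rule: infinite_finite_induct) (auto simp: matrix_vector_mult_add_rdistrib)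

lemma mscale_sum: "mscale c (\<Sum>i\<in>F. f i) = (\<Sum>i\<in>F. mscale c (f i))"
  by (induction F rule: infinite_finite_induct) (auto simp: mscale_add_right)

lemma matrix_mult_in_subspace_span:
  fixes T :: "'n::finite cmat set"
  assumes T: "cmat.subspace T" and GH: "\<And>g h. g \<in> G \<Longrightarrow> h \<in> H \<Longrightarrow> g ** h \<in> T"
    and x: "x \<in> cmat.span G" and y: "y \<in> cmat.span H"
  shows "x ** y \<in> T"
proof -
  have "x ** h \<in> T" if h: "h \<in> H" for h
    using x
  proof (induction rule: cmat.span_induct)
    case step
    then show ?case using GH h by blast
  qed (use T in \<open>auto simp: cmat.subspace_def matrix_add_rdistrib matrix_mult_mscale_left\<close>)
  from y show ?thesis
  proof (induction rule: cmat.span_induct)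
    case step
    then show ?case using \<open>\<And>h. h \<in> H \<Longrightarrow> x ** h \<in> T\<close> by blast
  qed (use T in \<open>auto simp: cmat.subspace_def matrix_add_ldistrib matrix_mult_mscale_right\<close>)
qed

section \<open>Evaluating polynomials at a matrix\<close>

lemma mpow_0 [simp]: "mpow A 0 = mat 1"
  and mpow_Suc: "mpow A (Suc i) = A ** mpow A i"
  by (simp_all add: mpow_def)

lemma poly_mat_eval_eq_sum_atMost:
  assumes "degree p \<le> N"
  shows "poly_mat_eval p A = (\<Sum>i\<le>N. mscale (coeff p i) (mpow A i))"
  unfolding poly_mat_eval_def
  by (rule sum.mono_neutral_left) (use assms in \<open>auto simp: coeff_eq_0\<close>)

lemma poly_mat_eval_0 [simp]: "poly_mat_eval 0 A = 0"
  by (simp add: poly_mat_eval_def)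

lemma poly_mat_eval_add: "poly_mat_eval (p + q) A = poly_mat_eval p A + poly_mat_eval q A"
  by (simp add: poly_mat_eval_eq_sum_atMost[of _ "max (degree p) (degree q)"] degree_add_le
      mscale_add_left sum.distrib)

lemma poly_mat_eval_smult: "poly_mat_eval (smult c p) A = mscale c (poly_mat_eval p A)"
  by (simp add: poly_mat_eval_eq_sum_atMost[of _ "degree p"] mscale_sum)

lemma poly_mat_eval_diff: "poly_mat_eval (p - q) A = poly_mat_eval p A - poly_mat_eval q A"
proof -
  have "poly_mat_eval (p - q) A + poly_mat_eval q A = poly_mat_eval p A"
    by (simp flip: poly_mat_eval_add)
  then show ?thesis by (simp add: eq_diff_eq)
qed

lemma poly_mat_eval_sum: "poly_mat_eval (\<Sum>i\<in>F. f i) A = (\<Sum>i\<in>F. poly_mat_eval (f i) A)"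
  by (induction F rule: infinite_finite_induct) (auto simp: poly_mat_eval_add)

lemma poly_mat_eval_monom: "poly_mat_eval (monom c k) A = mscale c (mpow A k)"
proof -
  have "poly_mat_eval (monom c k) A = (\<Sum>i\<le>k. mscale (coeff (monom c k) i) (mpow A i))"
    by (rule poly_mat_eval_eq_sum_atMost) (simp add: degree_monom_le)
  also have "\<dots> = (\<Sum>i\<le>k. if i = k then mscale c (mpow A k) else 0)"
    by (rule sum.cong) auto
  finally show ?thesis by simp
qed

lemma poly_mat_eval_pCons: "poly_mat_eval (pCons a p) A = mscale a (mat 1) + A ** poly_mat_eval p A"
proof -
  have "poly_mat_eval (pCons a p) A = (\<Sum>i\<le>Suc (degree p). mscale (coeff (pCons a p) i) (mpow A i))"
    by (rule poly_mat_eval_eq_sum_atMost) (simp add: degree_pCons_le)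
  also have "\<dots> = mscale a (mat 1) + (\<Sum>i\<le>degree p. mscale (coeff p i) (A ** mpow A i))"
    by (subst sum.atMost_Suc_shift) (simp add: mpow_Suc)
  also have "\<dots> = mscale a (mat 1) + A ** poly_mat_eval p A"
    by (simp add: poly_mat_eval_def matrix_mult_sum_right matrix_mult_mscale_right)
  finally show ?thesis .
qed

lemma poly_mat_eval_mult: "poly_mat_eval (p * q) A = poly_mat_eval p A ** poly_mat_eval q A"
proof (induction p)
  case (pCons a p)
  have "poly_mat_eval (pCons a p * q) A = mscale a (poly_mat_eval q A) + A ** (poly_mat_eval p A ** poly_mat_eval q A)"
    by (simp add: poly_mat_eval_add poly_mat_eval_smult poly_mat_eval_pCons pCons.IH)
  then show ?case
    by (simp add: poly_mat_eval_pCons matrix_add_rdistrib matrix_mult_mscale_left matrix_mul_assoc)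
qed simp

lemma poly_mat_eval_commute:
  "poly_mat_eval p A ** poly_mat_eval q A = poly_mat_eval q A ** poly_mat_eval p A"
  by (metis poly_mat_eval_mult mult.commute)

section \<open>An annihilating polynomial of degree at most n\<close>

definition invariant_subspace :: "('n::finite) cmat \<Rightarrow> (complex^'n) set \<Rightarrow> bool" where
  "invariant_subspace A W \<longleftrightarrow> vec.subspace W \<and> (\<forall>x\<in>W. A *v x \<in> W)"

lemma matrix_vector_mult_span:
  assumes "vec.subspace T" and "\<And>g. g \<in> G \<Longrightarrow> A *v g \<in> T" and "x \<in> vec.span G"
  shows "A *v x \<in> T"
  using vec.span_minimal[of G "(*v) A -` T"] assms
    vec.linear_subspace_vimage[OF matrix_vector_mul_linear_gen assms(1)]
  by blast

lemma poly_mat_eval_invariant: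
  assumes W: "invariant_subspace A W" and w: "w \<in> W"
  shows "poly_mat_eval p A *v w \<in> W"
proof (induction p)
  case (pCons a p)
  have "poly_mat_eval (pCons a p) A *v w = a *s w + A *v (poly_mat_eval p A *v w)"
    by (simp add: poly_mat_eval_pCons matrix_vector_mult_add_rdistrib mscale_matrix_vector_mult
        matrix_vector_mul_assoc)
  then show ?case
    using pCons.IH W w by (simp add: invariant_subspace_def vec.subspace_add vec.subspace_scale)
qed (use W in \<open>simp add: invariant_subspace_def vec.subspace_0\<close>)

definition krylov :: "('n::finite) cmat \<Rightarrow> (complex^'n) set \<Rightarrow> complex^'n \<Rightarrow> nat \<Rightarrow> (complex^'n) set"
  where "krylov A W v j = vec.span (W \<union> (\<lambda>i. mpow A i *v v) ` {..<j})"

lemma vec_dim_le_card: "vec.dim (X :: ('a::field^'n) set) \<le> CARD('n)"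
  by (metis vec.dim_subset subset_UNIV vec_dim_card)

lemma krylov_0: "vec.subspace W \<Longrightarrow> krylov A W v 0 = W"
  by (simp add: krylov_def)

lemma dim_krylov:
  assumes "\<And>i. i < j \<Longrightarrow> mpow A i *v v \<notin> krylov A W v i"
  shows "vec.dim (krylov A W v j) = vec.dim W + j"
  using assms
proof (induction j)
  case (Suc j)
  have "krylov A W v (Suc j) = vec.span (insert (mpow A j *v v) (W \<union> (\<lambda>i. mpow A i *v v) ` {..<j}))"
    by (simp add: krylov_def lessThan_Suc)
  then show ?case
    using Suc by (simp add: vec.dim_insert krylov_def)
qed (simp add: krylov_def)

lemma krylov_closes:
  fixes A :: "'n::finite cmat"
  shows "\<exists>k. mpow A k *v v \<in> krylov A W v k"
proof (rule ccontr)
  let ?N = "Suc CARD('n)"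
  assume "\<nexists>k. mpow A k *v v \<in> krylov A W v k"
  then have "vec.dim (krylov A W v ?N) = vec.dim W + ?N"
    by (intro dim_krylov) blast
  with vec_dim_le_card[of "krylov A W v ?N"] show False by simp
qed

lemma krylov_invariant:
  assumes W: "invariant_subspace A W" and k: "mpow A k *v v \<in> krylov A W v k"
  shows "invariant_subspace A (krylov A W v k)"
proof -
  have "A *v g \<in> krylov A W v k" if g: "g \<in> W \<union> (\<lambda>i. mpow A i *v v) ` {..<k}" for g
  proof (cases "g \<in> W")
    case True
    then show ?thesis
      using W by (auto simp: invariant_subspace_def krylov_def intro: vec.span_base)
  next
    case False
    then obtain i where i: "i < k" "g = mpow A i *v v" using g by blast
    then have "A *v g = mpow A (Suc i) *v v"
      by (simp add: mpow_Suc matrix_vector_mul_assoc)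
    then show ?thesis
      using i k by (cases "Suc i = k") (auto simp: krylov_def intro: vec.span_base)
  qed
  then show ?thesis
    unfolding invariant_subspace_def krylov_def
    using matrix_vector_mult_span[OF vec.subspace_span] by blast
qed

lemma in_span_subspace_Un_image:
  fixes g :: "nat \<Rightarrow> 'a::field^'n"
  assumes W: "vec.subspace W" and x: "x \<in> vec.span (W \<union> g ` {..<k})"
  shows "\<exists>w\<in>W. \<exists>c. x = w + (\<Sum>i<k. c i *s g i)"
  using x
proof (induction rule: vec.span_induct)
  case base
  show ?case
    unfolding vec.subspace_def
  proof (safe)
    show "\<exists>w\<in>W. \<exists>c. 0 = w + (\<Sum>i<k. c i *s g i)"
      using W by (intro bexI[of _ 0] exI[of _ "\<lambda>_. 0"]) (auto simp: vec.subspace_0)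
  next
    fix w1 w2 c1 c2 assume "w1 \<in> W" "w2 \<in> W"
    then show "\<exists>w\<in>W. \<exists>c. w1 + (\<Sum>i<k. c1 i *s g i) + (w2 + (\<Sum>i<k. c2 i *s g i))
        = w + (\<Sum>i<k. c i *s g i)"
      using W by (intro bexI[of _ "w1 + w2"] exI[of _ "\<lambda>i. c1 i + c2 i"])
        (auto simp: vec.subspace_add sum.distrib vec.scale_left_distrib)
  next
    fix a w c assume "w \<in> W"
    then show "\<exists>w'\<in>W. \<exists>c'. a *s (w + (\<Sum>i<k. c i *s g i)) = w' + (\<Sum>i<k. c' i *s g i)"
      using W by (intro bexI[of _ "a *s w"] exI[of _ "\<lambda>i. a * c i"])
        (auto simp: vec.subspace_scale vec.scale_sum_right vec.scale_right_distrib)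
  qed
next
  case (step y)
  then show ?case
  proof
    assume "y \<in> W"
    then show ?thesis by (intro bexI[of _ y] exI[of _ "\<lambda>_. 0"]) auto
  next
    assume "y \<in> g ` {..<k}"
    then obtain j where "j < k" "y = g j" by blast
    then have "y = 0 + (\<Sum>i<k. (if i = j then 1 else 0) *s g i)"
      by (simp add: if_distrib[of "\<lambda>c. c *s _"] cong: if_cong)
    with vec.subspace_0[OF W] show ?thesis
      by (intro bexI[of _ 0] exI[of _ "\<lambda>i. if i = j then 1 else 0"])
  qed
qed

lemma krylov_relation:
  assumes W: "vec.subspace W" and k: "mpow A k *v v \<in> krylov A W v k"
  obtains q where "lead_coeff q = 1" "degree q = k" "poly_mat_eval q A *v v \<in> W"
proof -
  let ?g = "\<lambda>i. mpow A i *v v"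
  from in_span_subspace_Un_image[OF W k[unfolded krylov_def]]
  obtain w c where w: "w \<in> W" and gk: "?g k = w + (\<Sum>i<k. c i *s ?g i)"
    by blast
  define q where "q = monom 1 k - (\<Sum>i<k. monom (c i) i)"
  have coeff_q: "coeff q j = (if j = k then 1 else if j < k then - c j else 0)" for j
    by (auto simp: q_def coeff_sum)
  have "degree q = k"
    by (rule antisym; (rule degree_le le_degree)?) (auto simp: coeff_q)
  moreover have "poly_mat_eval q A *v v = w"
    using gk by (simp add: q_def poly_mat_eval_diff poly_mat_eval_sum poly_mat_eval_monom
        matrix_vector_mult_diff_rdistrib sum_matrix_vector_mult mscale_matrix_vector_mult)
  ultimately show ?thesis
    using that[of q] w by (simp add: coeff_q)
qed

lemma poly_mat_eval_krylov:
  assumes W: "invariant_subspace A W" and q: "poly_mat_eval q A *v v \<in> W"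
    and x: "x \<in> krylov A W v k"
  shows "poly_mat_eval q A *v x \<in> W"
proof (rule matrix_vector_mult_span[OF _ _ x[unfolded krylov_def]])
  show "vec.subspace W"
    using W by (simp add: invariant_subspace_def)
  fix g assume "g \<in> W \<union> (\<lambda>i. mpow A i *v v) ` {..<k}"
  then show "poly_mat_eval q A *v g \<in> W"
  proof
    assume "g \<in> W"
    then show ?thesis using poly_mat_eval_invariant[OF W] by blast
  next
    assume "g \<in> (\<lambda>i. mpow A i *v v) ` {..<k}"
    then obtain i where "g = poly_mat_eval (monom 1 i) A *v v"
      by (auto simp: poly_mat_eval_monom)
    then have "poly_mat_eval q A *v g = poly_mat_eval (monom 1 i) A *v (poly_mat_eval q A *v v)"
      by (simp add: matrix_vector_mul_assoc poly_mat_eval_commute)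
    then show ?thesis
      using poly_mat_eval_invariant[OF W q] by simp
  qed
qed

text \<open>Induction on the codimension of \<open>W\<close>: the Krylov space of a vector outside \<open>W\<close>
  is a strictly larger invariant subspace, and a relation of degree \<open>k\<close> among its generators
  maps it back into \<open>W\<close>.\<close>

lemma invariant_subspace_annihilator:
  fixes A :: "'n::finite cmat"
  assumes "invariant_subspace A W"
  shows "\<exists>q. lead_coeff q = 1 \<and> degree q + vec.dim W \<le> CARD('n) \<and> (\<forall>x. poly_mat_eval q A *v x \<in> W)"
  using assms
proof (induction "CARD('n) - vec.dim W" arbitrary: W rule: less_induct)
  case less
  show ?case
  proof (cases "W = UNIV")
    case True
    then show ?thesis
      using vec_dim_card[where 'a=complex and 'n='n] by (intro exI[of _ 1]) simp
  next
    case False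
    then obtain v where v: "v \<notin> W" by blast
    have W: "vec.subspace W"
      using less.prems by (simp add: invariant_subspace_def)
    define k where "k = (LEAST k. mpow A k *v v \<in> krylov A W v k)"
    let ?U = "krylov A W v k"
    have closes: "mpow A k *v v \<in> ?U"
      unfolding k_def by (rule LeastI_ex[OF krylov_closes])
    have dim_U: "vec.dim ?U = vec.dim W + k"
      by (rule dim_krylov) (metis k_def not_less_Least)
    have "k \<noteq> 0"
      using closes v W by (metis krylov_0 mpow_0 matrix_vector_mul_lid)
    with dim_U vec_dim_le_card[of ?U] have "CARD('n) - vec.dim ?U < CARD('n) - vec.dim W"
      by linarith
    from less.hyps[OF this krylov_invariant[OF less.prems closes]] obtain q2 where
      q2: "lead_coeff q2 = 1" "degree q2 + vec.dim ?U \<le> CARD('n)" "\<forall>x. poly_mat_eval q2 A *v x \<in> ?U"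
      by blast
    obtain q1 where q1: "lead_coeff q1 = 1" "degree q1 = k" "poly_mat_eval q1 A *v v \<in> W"
      using krylov_relation[OF W closes] by blast
    show ?thesis
    proof (intro exI[of _ "q1 * q2"] conjI allI)
      show "lead_coeff (q1 * q2) = 1"
        using q1 q2 by (simp add: lead_coeff_mult)
      have "q1 \<noteq> 0" "q2 \<noteq> 0"
        using q1 q2 by auto
      then show "degree (q1 * q2) + vec.dim W \<le> CARD('n)"
        using q1 q2 dim_U by (simp add: degree_mult_eq)
      fix x
      show "poly_mat_eval (q1 * q2) A *v x \<in> W"
        using poly_mat_eval_krylov[OF less.prems q1(3) q2(3)[rule_format, of x]]
        by (simp add: poly_mat_eval_mult flip: matrix_vector_mul_assoc)
    qed
  qed
qed

lemma annihilating_poly_exists: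
  fixes A :: "'n::finite cmat"
  obtains q where "lead_coeff q = 1" "degree q \<le> CARD('n)" "poly_mat_eval q A = 0"
proof -
  have "invariant_subspace A {0}"
    by (simp add: invariant_subspace_def)
  from invariant_subspace_annihilator[OF this] obtain q where
    "lead_coeff q = 1" "degree q \<le> CARD('n)" "\<forall>x. poly_mat_eval q A *v x = 0"
    by auto
  then show ?thesis
    using that by (simp add: matrix_eq)
qed

section \<open>The minimal polynomial\<close>

definition is_min_poly :: "complex poly \<Rightarrow> ('n::finite) cmat \<Rightarrow> bool" where
  "is_min_poly p A \<longleftrightarrow> lead_coeff p = 1 \<and> poly_mat_eval p A = 0 \<and>
     (\<forall>q. q \<noteq> 0 \<and> poly_mat_eval q A = 0 \<longrightarrow> degree p \<le> degree q)"

lemma is_min_poly_exists: "\<exists>p. is_min_poly p A"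
proof -
  obtain q where "lead_coeff q = 1" "poly_mat_eval q A = 0"
    using annihilating_poly_exists by metis
  then have "q \<noteq> 0 \<and> poly_mat_eval q A = 0"
    by auto
  from ex_has_least_nat[of "\<lambda>q. q \<noteq> 0 \<and> poly_mat_eval q A = 0", OF this, of degree]
  obtain q0 where q0: "q0 \<noteq> 0" "poly_mat_eval q0 A = 0"
    "\<And>q. q \<noteq> 0 \<and> poly_mat_eval q A = 0 \<Longrightarrow> degree q0 \<le> degree q"
    by blast
  have "is_min_poly (smult (inverse (lead_coeff q0)) q0) A"
    using q0 by (auto simp: is_min_poly_def poly_mat_eval_smult)
  then show ?thesis ..
qed

lemma is_min_poly_unique:
  assumes p: "is_min_poly p A" and p': "is_min_poly p' A"
  shows "p = p'"
proof (rule ccontr)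
  assume "p \<noteq> p'"
  moreover have "p \<noteq> 0" "p' \<noteq> 0"
    using p p' by (auto simp: is_min_poly_def)
  then have same_degree: "degree p = degree p'"
    using p p' unfolding is_min_poly_def by (meson antisym)
  ultimately have "p - p' \<noteq> 0" "poly_mat_eval (p - p') A = 0"
    using p p' by (auto simp: poly_mat_eval_diff is_min_poly_def)
  then have "degree p \<le> degree (p - p')"
    using p by (auto simp: is_min_poly_def)
  moreover have "degree (p - p') \<le> degree p"
    using same_degree by (simp add: degree_diff_le)
  ultimately have "degree (p - p') = degree p"
    by linarith
  moreover have "coeff (p - p') (degree p) = 0"
    using p p' same_degree by (simp add: is_min_poly_def)
  ultimately show False
    using \<open>p - p' \<noteq> 0\<close> by (metis leading_coeff_0_iff)
qed

lemma min_poly: "is_min_poly (min_poly A) A"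
  unfolding min_poly_def is_min_poly_def[symmetric]
  by (rule theI') (use is_min_poly_exists is_min_poly_unique in blast)

lemma degree_min_poly_le: "degree (min_poly (A :: 'n::finite cmat)) \<le> CARD('n)"
proof -
  obtain q where q: "lead_coeff q = 1" "degree q \<le> CARD('n)" "poly_mat_eval q A = 0"
    using annihilating_poly_exists by metis
  then have "degree (min_poly A) \<le> degree q"
    using min_poly[of A] unfolding is_min_poly_def by (metis leading_coeff_0_iff zero_neq_one)
  with q(2) show ?thesis
    by linarith
qed

text \<open>Otherwise \<open>min_poly A = X * r\<close>, and cancelling the invertible \<open>A\<close> in \<open>A ** r(A) = 0\<close>
  gives an annihilating polynomial of smaller degree.\<close>

lemma coeff_0_min_poly_neq_0:
  assumes "invertible A"
  shows "coeff (min_poly A) 0 \<noteq> 0"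
proof
  assume "coeff (min_poly A) 0 = 0"
  then obtain r where r: "min_poly A = pCons 0 r"
    by (cases "min_poly A") simp
  with min_poly[of A] have "r \<noteq> 0" and Ar: "A ** poly_mat_eval r A = 0"
    by (auto simp: is_min_poly_def poly_mat_eval_pCons)
  obtain B where "B ** A = mat 1"
    using assms by (auto simp: invertible_def)
  then have "poly_mat_eval r A = B ** (A ** poly_mat_eval r A)"
    by (simp add: matrix_mul_assoc)
  then have "poly_mat_eval r A = 0"
    unfolding Ar by (simp add: matrix_matrix_mult_def vec_eq_iff)
  with \<open>r \<noteq> 0\<close> min_poly[of A] have "degree (min_poly A) \<le> degree r"
    by (auto simp: is_min_poly_def)
  with r \<open>r \<noteq> 0\<close> show False
    by simp
qed

lemma mat_1_in_span_mpow:
  assumes "invertible A"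
  shows "mat 1 \<in> cmat.span (mpow A ` {1..degree (min_poly A)})"
proof -
  let ?p = "min_poly A" and ?c = "coeff (min_poly A) 0"
  let ?s = "\<Sum>i\<in>{1..degree ?p}. mscale (coeff ?p i) (mpow A i)"
  have "0 = poly_mat_eval ?p A"
    using min_poly[of A] by (simp add: is_min_poly_def)
  also have "\<dots> = (\<Sum>i\<in>insert 0 {1..degree ?p}. mscale (coeff ?p i) (mpow A i))"
    unfolding poly_mat_eval_def by (rule sum.cong) auto
  also have "\<dots> = mscale ?c (mat 1) + ?s"
    by (subst sum.insert) auto
  finally have "?s = - mscale ?c (mat 1)"
    by (simp add: eq_neg_iff_add_eq_0 add.commute)
  then have "mat 1 = mscale (- inverse ?c) ?s"
    using coeff_0_min_poly_neq_0[OF assms] by (simp add: vec_eq_iff)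
  also have "\<dots> \<in> cmat.span (mpow A ` {1..degree ?p})"
    by (intro cmat.span_scale cmat.span_sum cmat.span_base) auto
  finally show ?thesis .
qed

section \<open>Spans of words\<close>

definition mult_set :: "('n::finite) cmat set \<Rightarrow> 'n cmat set \<Rightarrow> 'n cmat set" where
  "mult_set S W = {X ** Y | X Y. X \<in> S \<and> Y \<in> W}"

lemma words_Suc_eq_mult_set: "words S (Suc m) = mult_set S (words S m)"
  by (simp add: mult_set_def)

lemma words_1: "words S 1 = S"
  by auto

lemma mult_set_UN: "mult_set S (\<Union>i\<in>I. W i) = (\<Union>i\<in>I. mult_set S (W i))"
  by (auto simp: mult_set_def)

lemma span_mult_set_span:
  "cmat.span (B \<union> mult_set S (cmat.span W)) = cmat.span (B \<union> mult_set S W)"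
proof (rule antisym)
  have "X ** Y \<in> cmat.span (B \<union> mult_set S W)" if "X \<in> S" "Y \<in> cmat.span W" for X Y
    by (rule matrix_mult_in_subspace_span[of _ "{X}" W])
      (use that in \<open>auto simp: mult_set_def intro: cmat.span_base\<close>)
  then show "cmat.span (B \<union> mult_set S (cmat.span W)) \<subseteq> cmat.span (B \<union> mult_set S W)"
    by (intro cmat.span_minimal) (auto simp: mult_set_def intro: cmat.span_base)
  show "cmat.span (B \<union> mult_set S W) \<subseteq> cmat.span (B \<union> mult_set S (cmat.span W))"
    by (rule cmat.span_mono) (auto simp: mult_set_def intro: cmat.span_base)
qed

lemma L_Suc: "L S (Suc k) = cmat.span ({mat 1} \<union> mult_set S (L S k))"
proof -
  have "(\<Union>m\<in>{0..Suc k}. words S m) = {mat 1} \<union> mult_set S (\<Union>m\<in>{0..k}. words S m)"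
    by (simp only: atLeast0_atMost_Suc_eq_insert_0 UN_insert image_image words.simps(1)
        words_Suc_eq_mult_set mult_set_UN)
  then show ?thesis
    unfolding L_def lin_span_eq_span span_mult_set_span by simp
qed

lemma L0_Suc: "L0 S (Suc k) = cmat.span (S \<union> mult_set S (L0 S k))"
proof -
  have "{1..Suc k} = insert 1 (Suc ` {1..k})"
    by (auto simp: image_iff)
  then have "(\<Union>m\<in>{1..Suc k}. words S m) = S \<union> mult_set S (\<Union>m\<in>{1..k}. words S m)"
    by (simp only: UN_insert image_image words_1 words_Suc_eq_mult_set mult_set_UN)
  then show ?thesis
    unfolding L0_def lin_span_eq_span span_mult_set_span by simp
qed

lemma L_mono: "k \<le> k' \<Longrightarrow> L S k \<subseteq> L S k'"
  unfolding L_def lin_span_eq_span by (intro cmat.span_mono UN_mono) auto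

lemma L0_mono: "k \<le> k' \<Longrightarrow> L0 S k \<subseteq> L0 S k'"
  unfolding L0_def lin_span_eq_span by (intro cmat.span_mono UN_mono) auto

lemma L0_subset_L: "L0 S k \<subseteq> L S k"
  unfolding L_def L0_def lin_span_eq_span by (rule cmat.span_mono) auto

lemma L_subset_L0:
  assumes "mat 1 \<in> L0 S k"
  shows "L S k \<subseteq> L0 S k"
  unfolding L_def lin_span_eq_span
proof (rule cmat.span_minimal)
  show "cmat.subspace (L0 S k)"
    by (simp add: L0_def lin_span_eq_span)
  show "(\<Union>m\<in>{0..k}. words S m) \<subseteq> L0 S k"
  proof
    fix X assume "X \<in> (\<Union>m\<in>{0..k}. words S m)"
    then obtain m where m: "m \<le> k" "X \<in> words S m" by auto
    show "X \<in> L0 S k"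
    proof (cases m)
      case 0
      then show ?thesis using m assms by simp
    next
      case (Suc j)
      then show ?thesis
        using m unfolding L0_def lin_span_eq_span by (intro cmat.span_base UN_I[of m]) auto
    qed
  qed
qed

lemma words_add: "X \<in> words S a \<Longrightarrow> Y \<in> words S b \<Longrightarrow> X ** Y \<in> words S (a + b)"
proof (induction a arbitrary: X)
  case (Suc a)
  then obtain P Q where "X = P ** Q" "P \<in> S" "Q \<in> words S a"
    by auto
  with Suc.IH[of Q] Suc.prems(2) show ?case
    by (auto simp flip: matrix_mul_assoc)
qed simp

lemma L0_mult: "X \<in> L0 S a \<Longrightarrow> Y \<in> L0 S b \<Longrightarrow> X ** Y \<in> L0 S (a + b)"
  unfolding L0_def lin_span_eq_span
proof (rule matrix_mult_in_subspace_span[OF cmat.subspace_span])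
  fix g h assume "g \<in> (\<Union>m\<in>{1..a}. words S m)" "h \<in> (\<Union>m\<in>{1..b}. words S m)"
  then obtain i j where "i \<in> {1..a}" "j \<in> {1..b}" "g \<in> words S i" "h \<in> words S j"
    by blast
  then show "g ** h \<in> cmat.span (\<Union>m\<in>{1..a + b}. words S m)"
    by (intro cmat.span_base UN_I[of "i + j"] words_add) auto
qed

lemma mpow_in_L0:
  assumes "A \<in> L0 S t" and "1 \<le> i"
  shows "mpow A i \<in> L0 S (t * i)"
  using \<open>1 \<le> i\<close>
proof (induction i rule: dec_induct)
  case (step i)
  then show ?case
    using L0_mult[OF assms(1) step.IH] by (simp add: mpow_Suc)
qed (use assms(1) in \<open>simp add: mpow_Suc\<close>)

lemma mat_1_in_L0:
  assumes "A \<in> L0 S t" and "invertible A" and "t * degree (min_poly A) \<le> k"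
  shows "mat 1 \<in> L0 S k"
proof -
  have "mpow A i \<in> L0 S k" if i: "i \<in> {1..degree (min_poly A)}" for i
  proof -
    have "t * i \<le> k"
      using i by (intro le_trans[OF mult_le_mono2 assms(3)]) simp
    then show ?thesis
      using i mpow_in_L0[OF assms(1), of i] L0_mono[of "t * i" k S] by auto
  qed
  moreover have "cmat.subspace (L0 S k)"
    by (simp add: L0_def lin_span_eq_span)
  ultimately have "cmat.span (mpow A ` {1..degree (min_poly A)}) \<subseteq> L0 S k"
    by (intro cmat.span_minimal) auto
  then show ?thesis
    using mat_1_in_span_mpow[OF assms(2)] by (rule subsetD)
qed

section \<open>Stabilisation of the spaces\<close>

lemma span_recursion_stable:
  assumes rec: "\<And>k. F (Suc k) = cmat.span (B \<union> mult_set S (F k))"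
    and stable: "F k = F (Suc k)" and "k \<le> m"
  shows "F m = F k"
  using \<open>k \<le> m\<close>
proof (induction m rule: dec_induct)
  case (step m)
  have "F (Suc m) = cmat.span (B \<union> mult_set S (F k))"
    using rec[of m] step.IH by simp
  also have "\<dots> = F (Suc k)"
    by (rule rec[symmetric])
  finally show ?case
    using stable by simp
qed simp

lemma subspace_if_cmat_subspace:
  fixes X :: "('n::finite) cmat set"
  shows "cmat.subspace X \<Longrightarrow> subspace X"
proof -
  have "scaleR r Y = mscale (complex_of_real r) Y" for r and Y :: "'n cmat"
    by (simp add: vec_eq_iff scaleR_conv_of_real[where 'a=complex])
  then show "cmat.subspace X \<Longrightarrow> subspace X"
    unfolding subspace_def cmat.subspace_def by simp
qed

lemma L_stabilises:
  fixes S :: "('n::finite) cmat set"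
  shows "\<exists>k. L S k = L S (Suc k)"
proof (rule ccontr)
  assume "\<nexists>k. L S k = L S (Suc k)"
  moreover have "span (L S j) = L S j" for j
    by (simp add: subspace_if_cmat_subspace L_def lin_span_eq_span)
  ultimately have grows: "k \<le> dim (L S k)" for k
  proof (induction k)
    case (Suc k)
    have "L S k \<subset> L S (Suc k)"
      using Suc.prems L_mono[of k "Suc k" S] by auto
    then have "dim (L S k) < dim (L S (Suc k))"
      using dim_psubset[of "L S k" "L S (Suc k)"] Suc.prems by simp
    with Suc show ?case by simp
  qed simp
  have "dim (L S k) \<le> DIM('n cmat)" for k
    by (rule dim_subset_UNIV)
  from this[of "Suc DIM('n cmat)"] grows[of "Suc DIM('n cmat)"] show False
    by linarith
qed

lemma L_len_eq_UNIV:
  assumes "L_all S = UNIV"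
  shows "L S (len S) = UNIV"
proof -
  have stable: "L S (len S) = L S (Suc (len S))"
    unfolding len_def by (rule LeastI_ex[OF L_stabilises])
  have "L S m \<subseteq> L S (len S)" for m
  proof (cases "m \<le> len S")
    case True
    then show ?thesis by (rule L_mono)
  next
    case False
    then show ?thesis
      using span_recursion_stable[where F = "L S", OF L_Suc stable, of m] by simp
  qed
  then have "L_all S \<subseteq> L S (len S)"
    unfolding L_all_def by (rule UN_least)
  with assms show ?thesis
    by auto
qed

text \<open>Below \<open>len S\<close> the spaces \<open>L0 S k \<subseteq> L S k\<close> are proper, so \<open>L0\<close> cannot stabilise
  earlier.\<close>

lemma len0_eq_len:
  assumes "L_all S = UNIV" and "mat 1 \<in> L0 S (len S)"
  shows "len0 S = len S"
proof -
  let ?l = "len S"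
  have L0_full: "L0 S ?l = UNIV"
    using L_subset_L0[OF assms(2)] L_len_eq_UNIV[OF assms(1)] by auto
  have unstable: "L0 S k \<noteq> L0 S (Suc k)" if "k < ?l" for k
  proof
    assume "L0 S k = L0 S (Suc k)"
    then have "L0 S ?l = L0 S k"
      by (rule span_recursion_stable[where F = "L0 S", OF L0_Suc]) (use that in simp)
    then have "L S k = UNIV"
      using L0_full L0_subset_L[of S k] by auto
    moreover have "L S k \<subseteq> L S (Suc k)"
      by (rule L_mono) simp
    moreover have "L S k \<noteq> L S (Suc k)"
      using that unfolding len_def by (rule not_less_Least)
    ultimately show False
      by auto
  qed
  have "L0 S ?l = L0 S (Suc ?l)"
    using L0_full L0_mono[of ?l "Suc ?l" S] by auto
  then show ?thesis
    unfolding len0_def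
    by (rule Least_equality[where P = "\<lambda>k. L0 S k = L0 S (Suc k)"]) (use unstable not_le in blast)
qed

theorem mainTheorem2:
  fixes S :: "('n::finite) cmat set"
  assumes "finite S"
    and "L_all S = UNIV"
  shows "(len S \<ge> CARD('n) \<and> (\<exists>A\<in>L0 S 1. invertible A) \<longrightarrow> len0 S = len S)
       \<and> (len S = 2 * CARD('n) - 2 \<and> (\<exists>A\<in>L0 S 2. invertible A \<and> derogatory A)
            \<longrightarrow> len0 S = len S)"
proof (intro conjI impI; elim conjE bexE)
  fix A assume "CARD('n) \<le> len S" "A \<in> L0 S 1" "invertible A"
  then have "mat 1 \<in> L0 S (len S)"
    using degree_min_poly_le[of A] by (intro mat_1_in_L0[of A S 1]) auto
  then show "len0 S = len S"
    by (rule len0_eq_len[OF assms(2)])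
next
  fix A assume "len S = 2 * CARD('n) - 2" "A \<in> L0 S 2" "invertible A" "derogatory A"
  then have "mat 1 \<in> L0 S (len S)"
    by (intro mat_1_in_L0[of A S 2]) (auto simp: derogatory_def)
  then show "len0 S = len S"
    by (rule len0_eq_len[OF assms(2)])
qed

end
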